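(* Let $X\subset[0,1]$, let $f\in P(X)$, $\delta_0>0$, $p>0$ and $\epsilon>0$. Then there exist $\delta_1$ with $0<\delta_1<\delta_0$ and $g\in P(X)$ with $g>0$ and $\|g\|_\infty<p$ such that $$\frac{\log N_{\delta_1}(\mathrm{graph}(g+f))}{-\log\delta_1}\ \geq\ \limsup_{m\to\infty}\frac{\log g_m(X)}{\log m}-\epsilon,$$ where $g_m(X)=\sum_{k=1}^{m}\min\{m,\#(X\cap[\frac{k-1}{m},\frac{k}{m}])\}$.
   Context: $P(X)$ denotes the set of restrictions to $X$ of polygonal (continuous piecewise linear with finitely many pieces) functions. For $\delta>0$ and $F\subset\mathbb{R}^2$, $N_\delta(F)$ is the number of squares of the $\delta$-grid $\{[n_1\delta,(n_1+1)\delta)\times[n_2\delta,(n_2+1)\delta): n_1,n_2\in\mathbb{Z}\}$ that intersect $F$. $\mathrm{graph}(h)=\{(x,h(x)):x\in X\}$, $\|\cdot\|_\infty$ is the sup norm on $X$, and $\#A$ denotes cardinality (possibly infinite, with $\min\{m,\infty\}=m$). *)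

theory Defs
  imports "HOL-Analysis.Analysis"
begin

definition polygonal :: "(real \<Rightarrow> real) \<Rightarrow> bool" where
  "polygonal \<phi> \<longleftrightarrow> continuous_on UNIV \<phi> \<and>
     (\<exists>S. finite S \<and> (\<forall>a b. a < b \<and> {a<..<b} \<inter> S = {} \<longrightarrow>
        (\<exists>c d. \<forall>x\<in>{a..b}. \<phi> x = c * x + d)))"

text \<open>P(X): restrictions to X of polygonal functions; a function h :: real => real
  represents an element of P(X) if it agrees on X with some polygonal function
  (values outside X are irrelevant).\<close>
definition PX :: "real set \<Rightarrow> (real \<Rightarrow> real) set" where
  "PX X = {h. \<exists>\<phi>. polygonal \<phi> \<and> (\<forall>x\<in>X. h x = \<phi> x)}"

definition graph_on :: "real set \<Rightarrow> (real \<Rightarrow> real) \<Rightarrow> (real \<times> real) set" where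
  "graph_on X h = {(x, h x) | x. x \<in> X}"

definition N_delta :: "real \<Rightarrow> (real \<times> real) set \<Rightarrow> nat" where
  "N_delta \<delta> F = card {n :: int \<times> int. \<exists>z\<in>F.
      of_int (fst n) * \<delta> \<le> fst z \<and> fst z < (of_int (fst n) + 1) * \<delta> \<and>
      of_int (snd n) * \<delta> \<le> snd z \<and> snd z < (of_int (snd n) + 1) * \<delta>}"

definition supnorm_on :: "real set \<Rightarrow> (real \<Rightarrow> real) \<Rightarrow> real" where
  "supnorm_on X h = (if X = {} then 0 else (SUP x\<in>X. \<bar>h x\<bar>))"

text \<open>min{m, #A}, with min{m, infinity} = m.\<close>
definition min_card :: "nat \<Rightarrow> real set \<Rightarrow> nat" where
  "min_card m A = (if finite A then min m (card A) else m)"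

definition g_m :: "nat \<Rightarrow> real set \<Rightarrow> nat" where
  "g_m m X = (\<Sum>k=1..m. min_card m (X \<inter> {real (k - 1) / real m .. real k / real m}))"

end

theory Submission
  imports Defs
begin

text \<open>For a large integer M cut [0,1] into the columns [j/M, (j+1)/M) and pick in each column
  min{K, #points} points of X, with K about pM/4. A polygonal bump of height at most p, a sum of
  narrow hats at the picked points, lifts the picked points of the graph of f into pairwise
  distinct cells of the 1/M-grid: within a column they are sent to distinct rows of a window of K
  rows. So N_{1/M}(graph(g+f)) is at least the number of picked points, which is at least
  g_M(X)/(2 c0) with c0 depending only on p, because [(k-1)/M, k/M] meets only two columns.
  After taking logarithms the constant c0 is negligible, so choosing M large along a sequence that
  nearly realises the limsup gives the bound.\<close>

lemma polygonal_const: "polygonal (\<lambda>x. c)"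
  unfolding polygonal_def
  by (intro conjI continuous_intros exI[of _ "{}"] allI impI exI[of _ 0] exI[of _ c]) auto

lemma polygonal_abs_diff: "polygonal (\<lambda>x. \<bar>x - b\<bar>)"
  unfolding polygonal_def
proof (intro conjI exI[of _ "{b}"] allI impI)
  fix u v :: real
  assume uv: "u < v \<and> {u<..<v} \<inter> {b} = {}"
  show "\<exists>c d. \<forall>x\<in>{u..v}. \<bar>x - b\<bar> = c * x + d"
  proof (cases "b \<le> u")
    case True
    then show ?thesis by (intro exI[of _ 1] exI[of _ "-b"]) auto
  next
    case False
    then have "v \<le> b" using uv by auto
    then show ?thesis by (intro exI[of _ "-1"] exI[of _ b]) auto
  qed
next
  show "continuous_on UNIV (\<lambda>x. \<bar>x - b\<bar>)" by (intro continuous_intros)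
qed simp

lemma polygonal_cmult:
  assumes "polygonal \<phi>"
  shows "polygonal (\<lambda>x. a * \<phi> x)"
proof -
  obtain S where cont: "continuous_on UNIV \<phi>" and S: "finite S"
    and aff: "\<And>u v. u < v \<Longrightarrow> {u<..<v} \<inter> S = {} \<Longrightarrow> \<exists>c d. \<forall>x\<in>{u..v}. \<phi> x = c * x + d"
    using assms unfolding polygonal_def by blast
  have "\<exists>c d. \<forall>x\<in>{u..v}. a * \<phi> x = c * x + d"
    if uv: "u < v" "{u<..<v} \<inter> S = {}" for u v
  proof -
    obtain c d where "\<forall>x\<in>{u..v}. \<phi> x = c * x + d" using aff[OF uv] by blast
    then show ?thesis by (intro exI[of _ "a * c"] exI[of _ "a * d"]) (simp add: algebra_simps)
  qed
  moreover have "continuous_on UNIV (\<lambda>x. a * \<phi> x)" using cont by (intro continuous_intros)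
  ultimately show ?thesis unfolding polygonal_def using S by blast
qed

lemma polygonal_add:
  assumes "polygonal \<phi>" and "polygonal \<psi>"
  shows "polygonal (\<lambda>x. \<phi> x + \<psi> x)"
proof -
  obtain S where cont\<phi>: "continuous_on UNIV \<phi>" and S: "finite S"
    and aff\<phi>: "\<And>u v. u < v \<Longrightarrow> {u<..<v} \<inter> S = {} \<Longrightarrow> \<exists>c d. \<forall>x\<in>{u..v}. \<phi> x = c * x + d"
    using assms(1) unfolding polygonal_def by blast
  obtain T where cont\<psi>: "continuous_on UNIV \<psi>" and T: "finite T"
    and aff\<psi>: "\<And>u v. u < v \<Longrightarrow> {u<..<v} \<inter> T = {} \<Longrightarrow> \<exists>c d. \<forall>x\<in>{u..v}. \<psi> x = c * x + d"
    using assms(2) unfolding polygonal_def by blast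
  have "\<exists>c d. \<forall>x\<in>{u..v}. \<phi> x + \<psi> x = c * x + d"
    if uv: "u < v" "{u<..<v} \<inter> (S \<union> T) = {}" for u v
  proof -
    obtain c d where "\<forall>x\<in>{u..v}. \<phi> x = c * x + d" using aff\<phi>[of u v] uv by blast
    moreover obtain c' d' where "\<forall>x\<in>{u..v}. \<psi> x = c' * x + d'" using aff\<psi>[of u v] uv by blast
    ultimately show ?thesis by (intro exI[of _ "c + c'"] exI[of _ "d + d'"]) (simp add: algebra_simps)
  qed
  moreover have "continuous_on UNIV (\<lambda>x. \<phi> x + \<psi> x)"
    using cont\<phi> cont\<psi> by (intro continuous_intros)
  ultimately show ?thesis
    unfolding polygonal_def using S T by (intro conjI exI[of _ "S \<union> T"]) auto
qed

lemma polygonal_sum: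
  "finite I \<Longrightarrow> (\<And>i. i \<in> I \<Longrightarrow> polygonal (\<phi> i)) \<Longrightarrow> polygonal (\<lambda>x. \<Sum>i\<in>I. \<phi> i x)"
  by (induction I rule: finite_induct) (auto intro: polygonal_const polygonal_add)

lemma bounded_image_polygonal: "polygonal \<phi> \<Longrightarrow> compact K \<Longrightarrow> bounded (\<phi> ` K)"
  unfolding polygonal_def
  by (meson compact_continuous_image compact_imp_bounded continuous_on_subset subset_UNIV)

definition tent :: "real \<Rightarrow> real \<Rightarrow> real \<Rightarrow> real" where
  "tent w y x = (\<bar>x - (y - w)\<bar> - 2 * \<bar>x - y\<bar> + \<bar>x - (y + w)\<bar>) / (2 * w)"

lemma polygonal_tent: "polygonal (tent w y)"
proof -
  have "polygonal (\<lambda>x. 1 / (2 * w) * \<bar>x - (y - w)\<bar> +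
           (- 2 / (2 * w) * \<bar>x - y\<bar> + 1 / (2 * w) * \<bar>x - (y + w)\<bar>))"
    by (intro polygonal_add polygonal_cmult polygonal_abs_diff)
  moreover have "(\<lambda>x. 1 / (2 * w) * \<bar>x - (y - w)\<bar> +
           (- 2 / (2 * w) * \<bar>x - y\<bar> + 1 / (2 * w) * \<bar>x - (y + w)\<bar>)) = tent w y"
    by (cases "w = 0") (auto simp: tent_def fun_eq_iff field_simps)
  ultimately show ?thesis by simp
qed

lemma tent_nonneg: "w > 0 \<Longrightarrow> 0 \<le> tent w y x"
  unfolding tent_def by (auto simp: abs_if field_simps)

lemma tent_le_one: "w > 0 \<Longrightarrow> tent w y x \<le> 1"
  unfolding tent_def by (auto simp: abs_if field_simps)

lemma tent_centre: "w > 0 \<Longrightarrow> tent w y y = 1"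
  unfolding tent_def by simp

lemma tent_eq_0: "w > 0 \<Longrightarrow> w \<le> \<bar>x - y\<bar> \<Longrightarrow> tent w y x = 0"
  unfolding tent_def by (auto simp: abs_if split: if_splits)

lemma finite_set_separated:
  fixes S :: "real set"
  assumes "finite S"
  obtains w where "w > 0" and "\<And>x y. x \<in> S \<Longrightarrow> y \<in> S \<Longrightarrow> x \<noteq> y \<Longrightarrow> 2 * w \<le> \<bar>x - y\<bar>"
proof -
  define D where "D = (\<lambda>(x, y). \<bar>x - y\<bar>) ` {(x, y) \<in> S \<times> S. x \<noteq> y}"
  have "finite D" unfolding D_def using assms by (auto intro: finite_subset[of _ "S \<times> S"])
  show ?thesis
  proof (cases "D = {}")
    case True
    then show ?thesis using that[of 1] unfolding D_def by auto
  next
    case False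
    have "Min D > 0" using Min_in[OF \<open>finite D\<close> False] unfolding D_def by auto
    moreover have "Min D \<le> \<bar>x - y\<bar>" if "x \<in> S" "y \<in> S" "x \<noteq> y" for x y
      using \<open>finite D\<close> that unfolding D_def by (auto intro!: Min_le)
    ultimately show ?thesis using that[of "Min D / 2"] by auto
  qed
qed

lemma sum_tents_eq_single:
  assumes "finite S" and "y \<in> S" and "\<bar>x - y\<bar> < w"
    and sep: "\<And>z. z \<in> S \<Longrightarrow> z \<noteq> y \<Longrightarrow> 2 * w \<le> \<bar>z - y\<bar>"
  shows "(\<Sum>z\<in>S. a z * tent w z x) = a y * tent w y x"
proof -
  have "tent w z x = 0" if z: "z \<in> S - {y}" for z
  proof (rule tent_eq_0)
    show "w > 0" using assms(3) by linarith
    have "2 * w \<le> \<bar>z - y\<bar>" using sep[of z] z by blast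
    then show "w \<le> \<bar>x - z\<bar>" using assms(3) by arith
  qed
  then show ?thesis using assms(1,2) by (simp add: sum.remove)
qed

lemma polygonal_interpolant:
  fixes S :: "real set"
  assumes "finite S" and "0 \<le> A" and a: "\<And>y. y \<in> S \<Longrightarrow> 0 \<le> a y \<and> a y \<le> A"
  obtains h where "polygonal h" and "\<And>x. 0 \<le> h x \<and> h x \<le> A" and "\<And>y. y \<in> S \<Longrightarrow> h y = a y"
proof -
  obtain w where w: "w > 0" and sep: "\<And>x y. x \<in> S \<Longrightarrow> y \<in> S \<Longrightarrow> x \<noteq> y \<Longrightarrow> 2 * w \<le> \<bar>x - y\<bar>"
    using finite_set_separated[OF assms(1)] by blast
  define h where "h x = (\<Sum>y\<in>S. a y * tent w y x)" for x
  have "polygonal h"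
    unfolding h_def[abs_def] using assms(1)
    by (intro polygonal_sum polygonal_cmult polygonal_tent)
  moreover have "0 \<le> h x \<and> h x \<le> A" for x
  proof (cases "\<exists>y\<in>S. \<bar>x - y\<bar> < w")
    case True
    then obtain y where y: "y \<in> S" "\<bar>x - y\<bar> < w" by blast
    then have "h x = a y * tent w y x"
      unfolding h_def using sum_tents_eq_single[OF assms(1) y sep[OF _ y(1)]] by blast
    moreover have "a y * tent w y x \<le> A * 1"
      using a[OF y(1)] tent_nonneg[OF w] tent_le_one[OF w] by (intro mult_mono) auto
    ultimately show ?thesis using a[OF y(1)] tent_nonneg[OF w, of y x] by simp
  next
    case False
    then have "h x = 0" unfolding h_def by (intro sum.neutral) (auto simp: tent_eq_0[OF w] not_less)
    then show ?thesis using \<open>0 \<le> A\<close> by simp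
  qed
  moreover have "h y = a y" if y: "y \<in> S" for y
  proof -
    have "\<bar>y - y\<bar> < w" using w by simp
    then show ?thesis
      unfolding h_def using sum_tents_eq_single[OF assms(1) y _ sep[OF _ y]] tent_centre[OF w] by simp
  qed
  ultimately show ?thesis using that by blast
qed

definition grid_cell :: "real \<Rightarrow> real \<times> real \<Rightarrow> int \<times> int" where
  "grid_cell \<delta> z = (\<lfloor>fst z / \<delta>\<rfloor>, \<lfloor>snd z / \<delta>\<rfloor>)"

lemma N_delta_eq_card_grid_cells:
  assumes "\<delta> > 0"
  shows "N_delta \<delta> F = card (grid_cell \<delta> ` F)"
proof -
  have cell: "of_int n * \<delta> \<le> t \<and> t < (of_int n + 1) * \<delta> \<longleftrightarrow> \<lfloor>t / \<delta>\<rfloor> = n" for n t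
    using assms by (simp add: floor_eq_iff pos_le_divide_eq pos_divide_less_eq)
  have "{n. \<exists>z\<in>F. of_int (fst n) * \<delta> \<le> fst z \<and> fst z < (of_int (fst n) + 1) * \<delta> \<and>
      of_int (snd n) * \<delta> \<le> snd z \<and> snd z < (of_int (snd n) + 1) * \<delta>} =
    {n. \<exists>z\<in>F. \<lfloor>fst z / \<delta>\<rfloor> = fst n \<and> \<lfloor>snd z / \<delta>\<rfloor> = snd n}"
    by (simp only: cell conj_assoc[symmetric])
  also have "\<dots> = grid_cell \<delta> ` F" unfolding grid_cell_def by force
  finally show ?thesis unfolding N_delta_def by simp
qed

lemma finite_grid_cells:
  assumes "\<delta> > 0" and "bounded F"
  shows "finite (grid_cell \<delta> ` F)"
proof -
  obtain B where B: "\<And>z. z \<in> F \<Longrightarrow> norm z \<le> B" using assms(2) unfolding bounded_iff by blast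
  have "\<lfloor>t / \<delta>\<rfloor> \<in> {\<lfloor>- B / \<delta>\<rfloor>..\<lfloor>B / \<delta>\<rfloor>}" if "\<bar>t\<bar> \<le> B" for t
  proof -
    have "- B / \<delta> \<le> t / \<delta>" "t / \<delta> \<le> B / \<delta>"
      using that assms(1) by (intro divide_right_mono; simp)+
    then show ?thesis by (simp add: floor_mono)
  qed
  moreover have "\<bar>fst z\<bar> \<le> B" "\<bar>snd z\<bar> \<le> B" if "z \<in> F" for z
    using B[OF that] norm_fst_le[of "fst z" "snd z"] norm_snd_le[of "snd z" "fst z"] by auto
  ultimately have "grid_cell \<delta> ` F \<subseteq> {\<lfloor>- B / \<delta>\<rfloor>..\<lfloor>B / \<delta>\<rfloor>} \<times> {\<lfloor>- B / \<delta>\<rfloor>..\<lfloor>B / \<delta>\<rfloor>}"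
    unfolding grid_cell_def by blast
  then show ?thesis by (rule finite_subset) simp
qed

lemma card_le_N_delta:
  assumes "\<delta> > 0" and "bounded F" and "A \<subseteq> F" and "inj_on (grid_cell \<delta>) A"
  shows "card A \<le> N_delta \<delta> F"
proof -
  have "card A = card (grid_cell \<delta> ` A)" using assms(4) by (simp add: card_image)
  also have "\<dots> \<le> card (grid_cell \<delta> ` F)"
    using assms(3) finite_grid_cells[OF assms(1,2)] by (intro card_mono) auto
  finally show ?thesis using N_delta_eq_card_grid_cells[OF assms(1)] by simp
qed

lemma grid_cell_row_centre:
  assumes "M > 0"
  shows "grid_cell (1 / M) (x, (of_int n + 1 / 2) / M) = (\<lfloor>x * M\<rfloor>, n)"
  using assms unfolding grid_cell_def by (simp add: floor_eq_iff)

lemma bounded_graph_on: "bounded X \<Longrightarrow> bounded (h ` X) \<Longrightarrow> bounded (graph_on X h)"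
  unfolding graph_on_def by (erule bounded_subset[OF bounded_Times]) auto

lemma card_le_N_delta_row_centres:
  fixes M :: real and r :: "real \<Rightarrow> int"
  assumes M: "M > 0" and X: "bounded X" and h: "bounded (h ` X)" and S: "S \<subseteq> X"
    and inj: "inj_on (\<lambda>x. (\<lfloor>x * M\<rfloor>, r x)) S"
    and centre: "\<And>y. y \<in> S \<Longrightarrow> h y = (of_int (r y) + 1 / 2) / M"
  shows "card S \<le> N_delta (1 / M) (graph_on X h)"
proof -
  have "card S = card ((\<lambda>y. (y, h y)) ` S)"
    by (rule card_image[symmetric]) (simp add: inj_on_def)
  also have "\<dots> \<le> N_delta (1 / M) (graph_on X h)"
  proof (rule card_le_N_delta)
    show "0 < 1 / M" "bounded (graph_on X h)" using M X h by (simp_all add: bounded_graph_on)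
    show "(\<lambda>y. (y, h y)) ` S \<subseteq> graph_on X h" using S unfolding graph_on_def by blast
    show "inj_on (grid_cell (1 / M)) ((\<lambda>y. (y, h y)) ` S)"
      using inj centre grid_cell_row_centre[OF M] unfolding inj_on_def by auto
  qed
  finally show ?thesis .
qed

lemma min_card_le: "min_card m A \<le> m"
  unfolding min_card_def by auto

lemma min_card_mono: "A \<subseteq> B \<Longrightarrow> min_card m A \<le> min_card m B"
  unfolding min_card_def using finite_subset[of A B] card_mono[of B A] by auto

lemma min_card_Un_le: "min_card m (A \<union> B) \<le> min_card m A + min_card m B"
  unfolding min_card_def using card_Un_le[of A B] by auto

lemma min_card_le_mult:
  assumes "m \<le> c * k" and "1 \<le> c"
  shows "min_card m A \<le> c * min_card k A"
  using assms unfolding min_card_def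
  by (auto simp: min_def intro: order_trans[OF _ mult_le_mono1[of 1 c]])

lemma exists_subset_card_min_card:
  obtains T where "finite T" and "T \<subseteq> A" and "card T = min_card k A"
proof (cases "finite A \<and> card A \<le> k")
  case True
  then show ?thesis using that[of A] unfolding min_card_def by auto
next
  case False
  then obtain T where "T \<subseteq> A" "card T = k" "finite T"
    using obtain_subset_with_card_n[of k A] infinite_arbitrarily_large[of A k]
    by (metis linorder_le_cases)
  then show ?thesis using False that unfolding min_card_def by auto
qed

lemma exists_rows_injective_on_columns:
  fixes col :: "'a \<Rightarrow> 'b" and q :: "'a \<Rightarrow> int"
  assumes "finite A" and "\<And>j. card {x\<in>A. col x = j} \<le> K"
  shows "\<exists>r. (\<forall>x\<in>A. q x \<le> r x \<and> r x < q x + int K) \<and> inj_on (\<lambda>x. (col x, r x)) A"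
  using assms
proof (induction A rule: finite_induct)
  case empty
  then show ?case by auto
next
  case (insert x A)
  have "card {y\<in>A. col y = j} \<le> K" for j
    by (rule order_trans[OF card_mono insert.prems[of j]]) (use insert in auto)
  then obtain r where r_range: "\<forall>y\<in>A. q y \<le> r y \<and> r y < q y + int K"
    and r_inj: "inj_on (\<lambda>y. (col y, r y)) A"
    using insert.IH by blast
  define F where "F = {y\<in>A. col y = col x}"
  have "finite F" "x \<notin> F" using insert unfolding F_def by auto
  moreover have "insert x F \<subseteq> {y\<in>insert x A. col y = col x}" unfolding F_def by auto
  then have "card (insert x F) \<le> K"
    using order_trans[OF card_mono insert.prems[of "col x"]] insert by auto
  \<comment> \<open>fewer than K other points share the column of x, so a row of its window is free\<close>
  ultimately have "card (r ` F) < card {q x..<q x + int K}"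
    using card_image_le[of F r] by simp
  then have "\<not> {q x..<q x + int K} \<subseteq> r ` F"
    using card_mono[OF finite_imageI[OF \<open>finite F\<close>]] by (meson not_le)
  then obtain v where v: "v \<in> {q x..<q x + int K}" "v \<notin> r ` F" by blast
  have r_upd: "(r(x := v)) y = r y" if "y \<in> A" for y using that insert.hyps(2) by auto
  have "inj_on (\<lambda>y. (col y, (r(x := v)) y)) A"
    using r_inj inj_on_cong[of A "\<lambda>y. (col y, (r(x := v)) y)" "\<lambda>y. (col y, r y)"] r_upd
    by simp
  moreover have "(col x, v) \<notin> (\<lambda>y. (col y, (r(x := v)) y)) ` A"
  proof
    assume "(col x, v) \<in> (\<lambda>y. (col y, (r(x := v)) y)) ` A"
    then obtain y where "y \<in> A" "col y = col x" "r y = v" using r_upd by fastforce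
    then show False using v(2) unfolding F_def by blast
  qed
  moreover have "A - {x} = A" using insert.hyps(2) by blast
  ultimately have "inj_on (\<lambda>y. (col y, (r(x := v)) y)) (insert x A)"
    by (simp only: inj_on_insert fun_upd_same) blast
  moreover have "\<forall>y\<in>insert x A. q y \<le> (r(x := v)) y \<and> (r(x := v)) y < q y + int K"
    using r_range v by auto
  ultimately show ?case by blast
qed

lemma exists_selection_with_rows:
  fixes X :: "real set" and col q :: "real \<Rightarrow> int" and J :: "int set"
  assumes "finite J"
  obtains S r where "finite S" and "S \<subseteq> X"
    and "card S = (\<Sum>j\<in>J. min_card K {x\<in>X. col x = j})"
    and "\<And>x. x \<in> S \<Longrightarrow> q x \<le> r x \<and> r x < q x + int K"
    and "inj_on (\<lambda>x. (col x, r x)) S"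
proof -
  have "\<forall>j. \<exists>T. finite T \<and> T \<subseteq> {x\<in>X. col x = j} \<and> card T = min_card K {x\<in>X. col x = j}"
    by (metis exists_subset_card_min_card)
  then obtain T where T: "\<And>j. finite (T j) \<and> T j \<subseteq> {x\<in>X. col x = j} \<and>
      card (T j) = min_card K {x\<in>X. col x = j}"
    by metis
  define S where "S = (\<Union>j\<in>J. T j)"
  have S_fin: "finite S" unfolding S_def using assms T by blast
  have S_sub: "S \<subseteq> X" unfolding S_def using T by blast
  have "card S = (\<Sum>j\<in>J. card (T j))"
    unfolding S_def using assms T by (intro card_UN_disjoint) blast+
  then have S_card: "card S = (\<Sum>j\<in>J. min_card K {x\<in>X. col x = j})" using T by simp
  have "card {x\<in>S. col x = j} \<le> K" for j
  proof -
    have "{x\<in>S. col x = j} \<subseteq> T j" unfolding S_def using T by blast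
    then have "card {x\<in>S. col x = j} \<le> card (T j)" using T card_mono by blast
    then show ?thesis using T[of j] min_card_le[of K] by (metis order_trans)
  qed
  then obtain r where "\<forall>x\<in>S. q x \<le> r x \<and> r x < q x + int K" "inj_on (\<lambda>x. (col x, r x)) S"
    using exists_rows_injective_on_columns[OF S_fin] by blast
  then show ?thesis using that[OF S_fin S_sub S_card] by blast
qed

lemma sum_adjacent_pairs:
  fixes F :: "nat \<Rightarrow> nat"
  shows "(\<Sum>k=1..m. F (k - 1) + F k) + F 0 + F m = 2 * (\<Sum>j=0..m. F j)"
  by (induction m) auto

lemma floor_mult_in_adjacent_columns:
  fixes m x :: real and k :: nat
  assumes m: "0 < m" and k: "1 \<le> k" and "real (k - 1) / m \<le> x" and "x \<le> real k / m"
  shows "\<lfloor>x * m\<rfloor> = int (k - 1) \<or> \<lfloor>x * m\<rfloor> = int k"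
proof -
  have "real (k - 1) \<le> x * m" "x * m \<le> real k"
    using assms(3,4) m by (simp_all add: pos_divide_le_eq pos_le_divide_eq)
  moreover have "real (k - 1) = real k - 1" using k by (simp add: of_nat_diff)
  ultimately have "x * m = real k \<or> \<lfloor>x * m\<rfloor> = int k - 1"
    by (auto simp: floor_eq_iff)
  then show ?thesis using k by auto
qed

lemma g_m_le_column_sum:
  "g_m m X \<le> 2 * (\<Sum>j\<in>{0..int m}. min_card m {x\<in>X. \<lfloor>x * real m\<rfloor> = j})"
proof -
  define F where "F j = min_card m {x\<in>X. \<lfloor>x * real m\<rfloor> = int j}" for j
  have "min_card m (X \<inter> {real (k - 1) / real m..real k / real m}) \<le> F (k - 1) + F k"
    if k: "k \<in> {1..m}" for k
  proof -
    have m: "real m > 0" using k by simp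
    have "X \<inter> {real (k - 1) / real m..real k / real m} \<subseteq>
        {x\<in>X. \<lfloor>x * real m\<rfloor> = int (k - 1)} \<union> {x\<in>X. \<lfloor>x * real m\<rfloor> = int k}"
    proof
      fix x assume "x \<in> X \<inter> {real (k - 1) / real m..real k / real m}"
      then have x: "x \<in> X" "real (k - 1) / real m \<le> x" "x \<le> real k / real m" by auto
      then show "x \<in> {x\<in>X. \<lfloor>x * real m\<rfloor> = int (k - 1)} \<union> {x\<in>X. \<lfloor>x * real m\<rfloor> = int k}"
        using floor_mult_in_adjacent_columns[OF m _ x(2,3)] k by auto
    qed
    then have "min_card m (X \<inter> {real (k - 1) / real m..real k / real m}) \<le>
        min_card m ({x\<in>X. \<lfloor>x * real m\<rfloor> = int (k - 1)} \<union> {x\<in>X. \<lfloor>x * real m\<rfloor> = int k})"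
      by (rule min_card_mono)
    also have "\<dots> \<le> F (k - 1) + F k" unfolding F_def by (rule min_card_Un_le)
    finally show ?thesis .
  qed
  then have "g_m m X \<le> (\<Sum>k=1..m. F (k - 1) + F k)"
    unfolding g_m_def by (rule sum_mono)
  also have "\<dots> \<le> 2 * (\<Sum>j=0..m. F j)"
    using sum_adjacent_pairs[of F m] by linarith
  also have "(\<Sum>j=0..m. F j) = (\<Sum>j\<in>{0..int m}. min_card m {x\<in>X. \<lfloor>x * real m\<rfloor> = j})"
    unfolding F_def image_int_atLeastAtMost[of 0 m, simplified, symmetric]
    by (simp add: sum.reindex)
  finally show ?thesis .
qed

lemma row_centre_offset_bounds:
  fixes M t :: real and r :: int
  assumes "M > 0" and "\<lceil>t * M\<rceil> \<le> r" and "r < \<lceil>t * M\<rceil> + int K"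
  shows "0 \<le> (of_int r + 1 / 2) / M - t \<and> (of_int r + 1 / 2) / M - t \<le> real (K + 1) / M"
proof -
  have "t * M \<le> of_int r"
    using le_of_int_ceiling[of "t * M"] assms(2) by linarith
  moreover have "of_int r \<le> t * M + real K"
    using of_int_ceiling_le_add_one[of "t * M"] assms(3) by linarith
  moreover have "((of_int r + 1 / 2) / M - t) * M = of_int r + 1 / 2 - t * M"
    using assms(1) by (simp add: field_simps)
  ultimately have "0 \<le> ((of_int r + 1 / 2) / M - t) * M" "((of_int r + 1 / 2) / M - t) * M \<le> real (K + 1)"
    by simp_all
  then show ?thesis
    using assms(1) by (simp add: zero_le_mult_iff pos_le_divide_eq)
qed

lemma lift_graph_to_distinct_cells:
  fixes X :: "real set" and f :: "real \<Rightarrow> real" and M K :: nat and c :: real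
  assumes X: "bounded X" and f: "bounded (f ` X)" and M: "M \<ge> 1"
  obtains g where "polygonal g" and "\<And>x. c \<le> g x \<and> g x \<le> c + real (K + 1) / real M"
    and "(\<Sum>j\<in>{0..int M}. min_card K {x\<in>X. \<lfloor>x * real M\<rfloor> = j})
           \<le> N_delta (1 / real M) (graph_on X (\<lambda>x. g x + f x))"
proof -
  have M_pos: "real M > 0" using M by simp
  define col where "col x = \<lfloor>x * real M\<rfloor>" for x
  define q where "q x = \<lceil>(c + f x) * real M\<rceil>" for x
  obtain S r where S_fin: "finite S" and S_sub: "S \<subseteq> X"
    and S_card: "card S = (\<Sum>j\<in>{0..int M}. min_card K {x\<in>X. col x = j})"
    and r_range: "\<And>x. x \<in> S \<Longrightarrow> q x \<le> r x \<and> r x < q x + int K"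
    and r_inj: "inj_on (\<lambda>x. (col x, r x)) S"
    by (rule exists_selection_with_rows[where J = "{0..int M}" and X = X and K = K and col = col and q = q,
      OF finite_atLeastAtMost_int]) blast
  \<comment> \<open>the lift moving (x, c + f x) to the centre of row r x\<close>
  define a where "a x = (of_int (r x) + 1 / 2) / real M - (c + f x)" for x
  have a_range: "0 \<le> a x \<and> a x \<le> real (K + 1) / real M" if "x \<in> S" for x
    unfolding a_def using row_centre_offset_bounds[OF M_pos] r_range[OF that] unfolding q_def
    by blast
  have "0 \<le> real (K + 1) / real M" by simp
  then obtain h where h: "polygonal h" "\<And>x. 0 \<le> h x \<and> h x \<le> real (K + 1) / real M"
    and h_S: "\<And>y. y \<in> S \<Longrightarrow> h y = a y"
    using polygonal_interpolant[where a = a, OF S_fin _ a_range] by blast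
  define g where "g x = c + h x" for x
  have g_poly: "polygonal g" unfolding g_def[abs_def] by (intro polygonal_add polygonal_const h(1))
  have g_range: "c \<le> g x \<and> g x \<le> c + real (K + 1) / real M" for x
    unfolding g_def using h(2)[of x] by simp
  have "bounded (g ` X)"
    using g_range by (intro bounded_subset[OF bounded_closed_interval[of c "c + real (K + 1) / real M"]]) auto
  have "card S \<le> N_delta (1 / real M) (graph_on X (\<lambda>x. g x + f x))"
  proof (rule card_le_N_delta_row_centres[OF M_pos X _ S_sub r_inj[unfolded col_def]])
    show "bounded ((\<lambda>x. g x + f x) ` X)" using \<open>bounded (g ` X)\<close> f by (rule bounded_plus_comp)
    show "g y + f y = (of_int (r y) + 1 / 2) / real M" if "y \<in> S" for y
      using that by (simp add: g_def h_S a_def)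
  qed
  then show ?thesis using that[OF g_poly g_range] S_card unfolding col_def by simp
qed

lemma exists_lift_g_m_le_N_delta:
  fixes X :: "real set" and f :: "real \<Rightarrow> real" and p :: real and c0 M :: nat
  assumes X: "bounded X" and f: "bounded (f ` X)" and p: "p > 0"
    and c0: "4 / p \<le> real c0" and M: "8 / p \<le> real M"
  obtains g where "polygonal g" and "\<And>x. p / 4 \<le> g x \<and> g x \<le> 3 * p / 4"
    and "g_m M X \<le> 2 * c0 * N_delta (1 / real M) (graph_on X (\<lambda>x. g x + f x))"
proof -
  have "0 < 4 / p" "0 < 8 / p" using p by simp_all
  then have M_pos: "real M > 0" and c0_ge: "1 \<le> c0" using c0 M by linarith+
  have pM: "8 \<le> p * real M" using M p by (simp add: pos_divide_le_eq mult.commute)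
  define K where "K = nat \<lceil>p * real M / 4\<rceil>"
  have "real K = of_int \<lceil>p * real M / 4\<rceil>"
    unfolding K_def using pM by (intro of_nat_nat) simp
  then have K_lo: "p * real M / 4 \<le> real K" and K_hi: "real K \<le> p * real M / 4 + 1"
    using le_of_int_ceiling of_int_ceiling_le_add_one by metis+
  have "real M = 4 / p * (p * real M / 4)" using p by simp
  also have "\<dots> \<le> real c0 * real K" using c0 K_lo p M_pos by (intro mult_mono) simp_all
  finally have M_le: "M \<le> c0 * K" by (simp flip: of_nat_mult)
  have "real (K + 1) \<le> p / 2 * real M" using K_hi pM by simp
  then have lift: "real (K + 1) / real M \<le> p / 2" using M_pos by (simp add: pos_divide_le_eq)
  obtain g where g: "polygonal g" "\<And>x. p / 4 \<le> g x \<and> g x \<le> p / 4 + real (K + 1) / real M"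
    and N: "(\<Sum>j\<in>{0..int M}. min_card K {x\<in>X. \<lfloor>x * real M\<rfloor> = j})
              \<le> N_delta (1 / real M) (graph_on X (\<lambda>x. g x + f x))"
    using lift_graph_to_distinct_cells[OF X f, of M "p / 4" K] M_pos by auto
  have "g_m M X \<le> 2 * (\<Sum>j\<in>{0..int M}. min_card M {x\<in>X. \<lfloor>x * real M\<rfloor> = j})"
    by (rule g_m_le_column_sum)
  also have "\<dots> \<le> 2 * (\<Sum>j\<in>{0..int M}. c0 * min_card K {x\<in>X. \<lfloor>x * real M\<rfloor> = j})"
    using min_card_le_mult[OF M_le c0_ge] by (intro mult_left_mono sum_mono) auto
  also have "\<dots> \<le> 2 * c0 * N_delta (1 / real M) (graph_on X (\<lambda>x. g x + f x))"
    using N by (simp add: sum_distrib_left[symmetric] mult.assoc)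
  finally have "g_m M X \<le> 2 * c0 * N_delta (1 / real M) (graph_on X (\<lambda>x. g x + f x))" .
  moreover have "p / 4 \<le> g x \<and> g x \<le> 3 * p / 4" for x using g(2)[of x] lift by linarith
  ultimately show ?thesis using that g(1) by blast
qed

lemma ln_ratio_ge_of_le_mult:
  fixes G N :: nat and C m t e :: real
  assumes m: "1 < m" and GN: "real G \<le> C * real N" and C: "1 \<le> C"
    and Cm: "ln C \<le> e * ln m" and t: "t < ln (real G) / ln m"
  shows "t - e \<le> ln (real N) / ln m"
proof -
  have lm: "ln m > 0" using m by simp
  have "0 \<le> e * ln m" using Cm C by (meson ln_ge_zero order_trans)
  then have e: "0 \<le> e" using lm by (simp add: zero_le_mult_iff)
  have N: "0 \<le> ln (real N) / ln m" using lm by (cases "N = 0") simp_all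
  show ?thesis
  proof (cases "G = 0")
    case True
    then show ?thesis using t e N by simp
  next
    case False
    then have "1 \<le> real G" by simp
    then have N_pos: "0 < real N" using GN C by (cases "N = 0") simp_all
    have "t * ln m < ln (real G)" using t lm by (simp add: pos_less_divide_eq)
    also have "ln (real G) \<le> ln (C * real N)"
      using GN \<open>1 \<le> real G\<close> by simp
    also have "\<dots> = ln C + ln (real N)" using C N_pos by (simp add: ln_mult)
    finally have "(t - e) * ln m \<le> ln (real N)" using Cm by (simp add: algebra_simps)
    then show ?thesis using lm by (simp add: pos_le_divide_eq)
  qed
qed

lemma g_m_le_square: "g_m m X \<le> m * m"
proof -
  have "g_m m X \<le> (\<Sum>k=1..m. m)" unfolding g_m_def by (intro sum_mono min_card_le)
  then show ?thesis by simp
qed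

lemma ln_g_m_ratio_bounds: "0 \<le> ln (real (g_m m X)) / ln (real m) \<and> ln (real (g_m m X)) / ln (real m) \<le> 2"
proof (cases "g_m m X = 0 \<or> m \<le> 1")
  case True
  then show ?thesis by (auto simp: le_Suc_eq)
next
  case False
  then have G: "1 \<le> real (g_m m X)" and m: "2 \<le> real m" by auto
  have lm: "ln (real m) > 0" using m by simp
  have "ln (real (g_m m X)) \<le> ln (real m * real m)"
    using G m g_m_le_square[of m X] by (subst ln_le_cancel_iff) (auto simp flip: of_nat_mult)
  also have "\<dots> = 2 * ln (real m)" using m by (simp add: ln_mult)
  finally show ?thesis using G lm by (simp add: divide_le_eq)
qed

lemma limsup_ln_g_m_ratio_finite:
  obtains s where "limsup (\<lambda>m. ereal (ln (real (g_m m X)) / ln (real m))) = ereal s"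
    and "\<And>e. 0 < e \<Longrightarrow> \<exists>\<^sub>F m in sequentially. s - e < ln (real (g_m m X)) / ln (real m)"
proof -
  define L where "L = limsup (\<lambda>m. ereal (ln (real (g_m m X)) / ln (real m)))"
  have "0 \<le> L" unfolding L_def
    by (intro le_Limsup trivial_limit_sequentially always_eventually) (simp add: ln_g_m_ratio_bounds)
  moreover have "L \<le> 2" unfolding L_def
    by (intro Limsup_bounded always_eventually) (simp add: ln_g_m_ratio_bounds)
  ultimately obtain s where L: "L = ereal s" by (cases L) auto
  have "\<exists>\<^sub>F m in sequentially. s - e < ln (real (g_m m X)) / ln (real m)" if "0 < e" for e
  proof (rule ccontr)
    assume "\<not> ?thesis"
    then have "\<forall>\<^sub>F m in sequentially. ereal (ln (real (g_m m X)) / ln (real m)) \<le> ereal (s - e)"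
      by (simp add: not_frequently not_less)
    then have "L \<le> ereal (s - e)" unfolding L_def by (rule Limsup_bounded)
    then show False using L that by simp
  qed
  then show ?thesis using that L unfolding L_def by blast
qed

lemma frequently_ex_large_ln:
  fixes b C e :: real
  assumes "\<exists>\<^sub>F m in sequentially. P m" and "0 < e"
  obtains M where "P M" and "b \<le> real M" and "ln C \<le> e * ln (real M)"
proof -
  have "\<forall>\<^sub>F m in sequentially. b \<le> real m"
    using filterlim_real_sequentially unfolding filterlim_at_top by blast
  moreover have "\<forall>\<^sub>F m in sequentially. ln C / e \<le> ln (real m)"
    using filterlim_compose[OF ln_at_top filterlim_real_sequentially] unfolding filterlim_at_top
    by blast
  ultimately have "\<exists>\<^sub>F m in sequentially. P m \<and> b \<le> real m \<and> ln C / e \<le> ln (real m)"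
    using frequently_eventually_frequently[OF assms(1) eventually_conj] by blast
  then obtain M where "P M" "b \<le> real M" "ln C / e \<le> ln (real M)"
    using frequently_ex by blast
  then show ?thesis using that assms(2) by (simp add: pos_divide_le_eq mult.commute)
qed

lemma bounded_image_PX: "X \<subseteq> {0..1} \<Longrightarrow> f \<in> PX X \<Longrightarrow> bounded (f ` X)"
proof -
  assume X: "X \<subseteq> {0..1}" and "f \<in> PX X"
  then obtain \<phi> where "polygonal \<phi>" and "\<forall>x\<in>X. f x = \<phi> x" unfolding PX_def by blast
  then have "f ` X \<subseteq> \<phi> ` {0..1}" using X by auto
  then show ?thesis
    by (rule bounded_subset[OF bounded_image_polygonal[OF \<open>polygonal \<phi>\<close> compact_Icc]])
qed

lemma supnorm_on_le: "0 \<le> B \<Longrightarrow> (\<And>x. x \<in> X \<Longrightarrow> \<bar>h x\<bar> \<le> B) \<Longrightarrow> supnorm_on X h \<le> B"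
  unfolding supnorm_on_def by (auto intro: cSUP_least)

lemma exists_lift_ln_N_delta_ratio_ge:
  fixes X :: "real set" and f :: "real \<Rightarrow> real" and p t e :: real and c0 M :: nat
  assumes X: "bounded X" and f: "bounded (f ` X)" and p: "p > 0" and c0: "4 / p \<le> real c0"
    and M: "max (8 / p) 2 \<le> real M" and c0_M: "ln (2 * real c0) \<le> e * ln (real M)"
    and t: "t < ln (real (g_m M X)) / ln (real M)"
  obtains g where "g \<in> PX X" and "\<And>x. 0 < g x" and "supnorm_on X g < p"
    and "t - e \<le> ln (real (N_delta (1 / real M) (graph_on X (\<lambda>x. g x + f x)))) / - ln (1 / real M)"
proof -
  obtain g where g: "polygonal g" "\<And>x. p / 4 \<le> g x \<and> g x \<le> 3 * p / 4"
    and g_m_le: "g_m M X \<le> 2 * c0 * N_delta (1 / real M) (graph_on X (\<lambda>x. g x + f x))"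
    using exists_lift_g_m_le_N_delta[OF X f p c0] M by auto
  define N where "N = N_delta (1 / real M) (graph_on X (\<lambda>x. g x + f x))"
  have "real (g_m M X) \<le> real (2 * c0 * N)" using g_m_le unfolding N_def by (simp only: of_nat_le_iff)
  then have GN: "real (g_m M X) \<le> 2 * real c0 * real N" by simp
  have "0 < 4 / p" using p by simp
  then have "0 < c0" using c0 by (metis of_nat_0_less_iff order_less_le_trans)
  then have "1 \<le> 2 * real c0" by simp
  moreover have M1: "1 < real M" using M by simp
  ultimately have "t - e \<le> ln (real N) / ln (real M)"
    using ln_ratio_ge_of_le_mult[OF _ GN _ c0_M t] by blast
  moreover have "- ln (1 / real M) = ln (real M)" using M1 by (simp add: ln_div)
  moreover have "g \<in> PX X" unfolding PX_def using g(1) by blast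
  moreover have "0 < g x" for x using g(2)[of x] p by (auto intro: less_le_trans[of 0 "p / 4"])
  moreover have "supnorm_on X g < p"
  proof -
    have "\<bar>g x\<bar> \<le> 3 * p / 4" for x using g(2)[of x] p by arith
    then have "supnorm_on X g \<le> 3 * p / 4" using p by (intro supnorm_on_le) simp_all
    then show ?thesis using p by simp
  qed
  ultimately show ?thesis using that unfolding N_def by simp
qed

theorem lemma1:
  fixes X :: "real set" and f :: "real \<Rightarrow> real" and \<delta>0 p \<epsilon> :: real
  assumes "X \<subseteq> {0..1}" and "f \<in> PX X" and "\<delta>0 > 0" and "p > 0" and "\<epsilon> > 0"
  shows "\<exists>\<delta>1 g. 0 < \<delta>1 \<and> \<delta>1 < \<delta>0 \<and> g \<in> PX X \<and> (\<forall>x\<in>X. g x > 0) \<and>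
           supnorm_on X g < p \<and>
           ereal (ln (real (N_delta \<delta>1 (graph_on X (\<lambda>x. g x + f x)))) / - ln \<delta>1)
             \<ge> limsup (\<lambda>m. ereal (ln (real (g_m m X)) / ln (real m))) - ereal \<epsilon>"
proof -
  have X: "bounded X" by (rule bounded_subset[OF bounded_closed_interval assms(1)])
  have e: "0 < \<epsilon> / 2" using assms(5) by simp
  obtain s where L: "limsup (\<lambda>m. ereal (ln (real (g_m m X)) / ln (real m))) = ereal s"
    and freq: "\<And>e. 0 < e \<Longrightarrow> \<exists>\<^sub>F m in sequentially. s - e < ln (real (g_m m X)) / ln (real m)"
    by (rule limsup_ln_g_m_ratio_finite) blast
  define c0 where "c0 = nat \<lceil>4 / p\<rceil>"
  have c0: "4 / p \<le> real c0" unfolding c0_def using le_of_int_ceiling[of "4 / p"] by linarith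
  obtain M where M_ratio: "s - \<epsilon> / 2 < ln (real (g_m M X)) / ln (real M)"
    and M_big: "max (max (8 / p) 2) (2 / \<delta>0) \<le> real M"
    and M_ln: "ln (2 * real c0) \<le> \<epsilon> / 2 * ln (real M)"
    by (rule frequently_ex_large_ln[OF freq[OF e] e,
          where b = "max (max (8 / p) 2) (2 / \<delta>0)" and C = "2 * real c0"])
  obtain g where "g \<in> PX X" "\<And>x. 0 < g x" "supnorm_on X g < p"
    and ratio: "s - \<epsilon> / 2 - \<epsilon> / 2 \<le>
      ln (real (N_delta (1 / real M) (graph_on X (\<lambda>x. g x + f x)))) / - ln (1 / real M)"
    by (rule exists_lift_ln_N_delta_ratio_ge[OF X bounded_image_PX[OF assms(1,2)] assms(4) c0 _ M_ln M_ratio])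
      (use M_big in auto)
  moreover have "0 < 1 / real M" "1 / real M < \<delta>0"
    using M_big assms(3) by (auto simp: field_simps)
  moreover have "limsup (\<lambda>m. ereal (ln (real (g_m m X)) / ln (real m))) - ereal \<epsilon> \<le>
      ereal (ln (real (N_delta (1 / real M) (graph_on X (\<lambda>x. g x + f x)))) / - ln (1 / real M))"
    using L ratio by simp
  ultimately show ?thesis by blast
qed

end
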